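(* Assume $\delta>d$, $\alpha=\gamma/(\delta-d)$, and that $f$ is not a polynomial product. Then for every $\epsilon>0$ there is $R>0$ such that $$\big|G_z^\alpha(w)-G_h(z^{-\alpha}w)\big|<\epsilon\quad\text{for all } (z,w) \text{ with } |z|>R,$$ i.e. $G_z^\alpha(w)=G_h(z^{-\alpha}w)+o(1)$ as $z\to\infty$, uniformly in $w$.
   Context: Let $p(z)=z^\delta+O(z^{\delta-1})$ be a monic polynomial of degree $\delta\ge 2$, and let $q(z,w)=b(z)w^d+(\text{terms of lower degree in } w)$ be a polynomial with $d=\deg_w q\ge 2$, where $b$ is a monic polynomial of degree $\gamma\ge 0$. Let $f(z,w)=(p(z),q(z,w))$; $f$ is a polynomial product if $q$ does not depend on $z$. Write $Q_z^n=q_{p^{n-1}(z)}\circ\cdots\circ q_{p(z)}\circ q_z$ with $q_z=q(z,\cdot)$. For $\delta>d$, $\alpha=\max\{n_j/(\delta-m_j)\}$ over monomials $z^{n_j}w^{m_j}$ appearing in $q$ with nonzero coefficient. $G_z^\alpha(w)=\lim_{n\to\infty}d^{-n}\log^+\big(|Q_z^n(w)|/|p^n(z)|^\alpha\big)$ (defined for $z$ with $p^n(z)\to\infty$). Give the monomial $z^nw^m$ weight $n+\alpha m$; let $h(z,w)$ be the sum of those terms of $q$ of weight exactly $\alpha\delta$ (the maximal weight; it contains $z^\gamma w^d$), and let $h(c)=h(1,c)$, a one-variable polynomial of degree $d$. $G_h(c)=\lim_{n\to\infty}d^{-n}\log^+|h^n(c)|$ is its Green function. The value $G_h(z^{-\alpha}w)$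 does not depend on the choice of branch of $z^{-\alpha}$. *)

theory Defs
  imports "HOL-Analysis.Analysis" "HOL-Computational_Algebra.Polynomial"
begin

text \<open>A polynomial q(z,w) in two complex variables is represented as a polynomial in w
  whose coefficients are polynomials in z: coeff (coeff q m) n is the coefficient of z^n w^m.\<close>

definition eval2 :: "complex poly poly \<Rightarrow> complex \<Rightarrow> complex \<Rightarrow> complex" where
  "eval2 q z w = (\<Sum>m\<le>degree q. poly (coeff q m) z * w ^ m)"

definition logplus :: "real \<Rightarrow> real" where
  "logplus x = max 0 (ln x)"

fun Qit :: "complex poly \<Rightarrow> complex poly poly \<Rightarrow> nat \<Rightarrow> complex \<Rightarrow> complex \<Rightarrow> complex" where
  "Qit p q 0 z w = w"
| "Qit p q (Suc n) z w = eval2 q ((poly p ^^ n) z) (Qit p q n z w)"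

definition alpha_exp :: "complex poly \<Rightarrow> complex poly poly \<Rightarrow> real" where
  "alpha_exp p q = Max {real n / (real (degree p) - real m) | n m. coeff (coeff q m) n \<noteq> 0}"

definition Galpha :: "complex poly \<Rightarrow> complex poly poly \<Rightarrow> complex \<Rightarrow> complex \<Rightarrow> real" where
  "Galpha p q z w = lim (\<lambda>n. logplus (norm (Qit p q n z w) / norm ((poly p ^^ n) z) powr alpha_exp p q)
                          / real (degree q) ^ n)"

text \<open>h(c) = h(1,c), where h collects the terms of q of weight n + alpha m = alpha delta.\<close>
definition hpoly :: "complex poly \<Rightarrow> complex poly poly \<Rightarrow> complex poly" where
  "hpoly p q = (\<Sum>m\<le>degree q. monom
      (\<Sum>n\<le>degree (coeff q m).
         if real n + alpha_exp p q * real m = alpha_exp p q * real (degree p)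
         then coeff (coeff q m) n else 0) m)"

definition green :: "complex poly \<Rightarrow> complex \<Rightarrow> real" where
  "green h c = lim (\<lambda>n. logplus (norm ((poly h ^^ n) c)) / real (degree h) ^ n)"

definition poly_product :: "complex poly poly \<Rightarrow> bool" where
  "poly_product q \<longleftrightarrow> (\<forall>m n. n > 0 \<longrightarrow> coeff (coeff q m) n = 0)"

end

theory Submission
  imports Defs
begin

(* Renormalize the fibre orbit by c_n = (p^n z)^{-\<alpha>} Q_z^n(w). Then c_{n+1} = F_y(c_n)
   with y = p^n(z) and F_y(c) = p(y)^{-\<alpha>} q(y, c y^\<alpha>). Splitting q by weights,
   F_y(c) = (phase) * (1 + o(1)) * (h(c) + o(1) (1 + |c|)^d) as y \<rightarrow> \<infinity>. Since G_h is
   invariant under the phases, grows like log near infinity and is continuous, this gives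
   |G_h(F_y c) - d G_h(c)| \<le> \<eta> for |y| large, uniformly in c. Hence (c_n) is a pseudo-orbit
   of h, and its escape rate, which is G_z^\<alpha>(w), lies within \<eta> of G_h(c_0). *)

lemma logplus_nonneg: "logplus x \<ge> 0"
  by (simp add: logplus_def)

lemma logplus_eq_ln: "x \<ge> 1 \<Longrightarrow> logplus x = ln x"
  by (simp add: logplus_def)

(* On nonnegative arguments logplus is ln (max 1 x); this form is visibly continuous. *)
lemma logplus_eq_ln_max:
  assumes "x \<ge> 0"
  shows "logplus x = ln (max 1 x)"
proof (cases "x \<ge> 1")
  case False
  hence "ln x \<le> 0" using assms by (cases "x = 0") auto
  thus ?thesis using False by (simp add: logplus_def max_def)
qed (simp add: logplus_def)

lemma logplus_le_self: "x \<ge> 0 \<Longrightarrow> logplus x \<le> x"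
proof (cases "x \<ge> 1")
  case True
  then show ?thesis using ln_le_minus_one[of x] by (simp add: logplus_def)
qed (simp add: logplus_eq_ln_max max_def)

lemma abs_ln_le_twice:
  fixes t :: real
  assumes "\<bar>t - 1\<bar> \<le> 1/2"
  shows "\<bar>ln t\<bar> \<le> 2 * \<bar>t - 1\<bar>"
proof -
  have t: "t > 0" "t \<ge> 1/2" using assms by (auto simp: abs_if split: if_splits)
  have upper: "ln t \<le> t - 1" using ln_le_minus_one t by simp
  have "ln (1/t) \<le> 1/t - 1" using ln_le_minus_one t by simp
  hence lower: "- ln t \<le> 1/t - 1" using t by (simp add: ln_div)
  have "1/t - 1 = (1 - t)/t" using t by (simp add: field_simps)
  also have "\<dots> \<le> \<bar>1 - t\<bar>/t" using t by (simp add: divide_right_mono)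
  also have "\<dots> \<le> \<bar>1 - t\<bar>/(1/2)" using t by (intro divide_left_mono) auto
  finally have "1/t - 1 \<le> 2 * \<bar>t - 1\<bar>" by (simp add: abs_minus_commute mult.commute)
  thus ?thesis using upper lower by (smt (verit))
qed

lemma geometric_increments_converge:
  fixes u :: "nat \<Rightarrow> real"
  assumes inc: "\<And>n. \<bar>u (Suc n) - u n\<bar> \<le> C * r ^ n" and r: "0 \<le> r" "r < 1"
  shows "u \<longlonglongrightarrow> lim u" "\<bar>lim u - u n\<bar> \<le> C * r ^ n / (1 - r)"
proof -
  define D where "D k = u (Suc k) - u k" for k
  have summable_geom: "summable (\<lambda>k. C * r ^ n * r ^ k)" for n
    using r by (intro summable_mult summable_geometric) auto
  have D_bound: "norm (D (k + n)) \<le> C * r ^ n * r ^ k" for k n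
    using inc[of "k + n"] by (simp add: D_def power_add mult_ac)
  have summable_D: "summable D"
    by (rule summable_comparison_test[OF _ summable_geom[of 0]]) (use D_bound[where n = 0] in auto)
  have u_sum: "u = (\<lambda>n. u 0 + (\<Sum>k<n. D k))"
    by (simp add: D_def sum_lessThan_telescope)
  have "u \<longlonglongrightarrow> u 0 + suminf D"
    by (subst u_sum) (intro tendsto_add tendsto_const summable_LIMSEQ summable_D)
  moreover from this have lim_u: "lim u = u 0 + suminf D" by (rule limI)
  ultimately show "u \<longlonglongrightarrow> lim u" by simp
  have "lim u - u n = suminf D - (\<Sum>k<n. D k)"
    using lim_u u_sum by (metis add_diff_cancel_left)
  also have "\<dots> = (\<Sum>k. D (k + n))"
    using suminf_split_initial_segment[OF summable_D, of n] by simp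
  finally have tail: "lim u - u n = (\<Sum>k. D (k + n))" .
  have summable_tail: "summable (\<lambda>k. norm (D (k + n)))"
    by (rule summable_comparison_test[OF _ summable_geom[of n]]) (use D_bound in auto)
  have "\<bar>\<Sum>k. D (k + n)\<bar> \<le> (\<Sum>k. norm (D (k + n)))"
    using summable_norm[OF summable_tail] by simp
  also have "\<dots> \<le> (\<Sum>k. C * r ^ n * r ^ k)"
    by (intro suminf_le summable_tail summable_geom D_bound)
  also have "\<dots> = C * r ^ n / (1 - r)"
    using r by (simp add: suminf_mult suminf_geometric divide_simps)
  finally show "\<bar>lim u - u n\<bar> \<le> C * r ^ n / (1 - r)" using tail by simp
qed

lemma escape_increments_converge:
  fixes u :: "nat \<Rightarrow> real" and d :: real
  assumes d: "d \<ge> 2" and inc: "\<And>n. \<bar>u (Suc n) - u n\<bar> \<le> B / d ^ Suc n"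
  shows "u \<longlonglongrightarrow> lim u" "\<bar>lim u - u n\<bar> \<le> B / d ^ n"
proof -
  have inc': "\<bar>u (Suc n) - u n\<bar> \<le> (B / d) * (1 / d) ^ n" for n
    using inc[of n] by (simp add: power_divide field_simps)
  have r: "0 \<le> 1 / d" "1 / d < 1" using d by auto
  show "u \<longlonglongrightarrow> lim u" by (rule geometric_increments_converge(1)[OF inc' r])
  have "0 \<le> B / d ^ Suc 0" using inc[of 0] abs_ge_zero order_trans by blast
  hence B: "B \<ge> 0" using d by (simp add: zero_le_divide_iff)
  have "B / (d - 1) \<le> B" using B d by (simp add: divide_le_eq mult_le_cancel_left1)
  then have "B / (d - 1) / d ^ n \<le> B / d ^ n" by (rule divide_right_mono) (use d in simp)
  moreover have "(B / d) * (1 / d) ^ n / (1 - 1 / d) = B / (d - 1) / d ^ n"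
    using d by (simp add: power_divide field_simps)
  ultimately have "(B / d) * (1 / d) ^ n / (1 - 1 / d) \<le> B / d ^ n" by simp
  then show "\<bar>lim u - u n\<bar> \<le> B / d ^ n"
    using geometric_increments_converge(2)[OF inc' r, of n] by linarith
qed

lemma monic_poly_minus_leading:
  fixes P :: "complex poly"
  assumes "lead_coeff P = 1" "norm x \<ge> 1"
  shows "norm (poly P x - x ^ degree P) \<le> (\<Sum>i<degree P. norm (coeff P i)) * norm x ^ (degree P - 1)"
proof -
  have "poly P x = (\<Sum>i<degree P. coeff P i * x ^ i) + x ^ degree P"
    by (simp add: poly_altdef lessThan_Suc_atMost[symmetric] assms(1))
  hence "norm (poly P x - x ^ degree P) = norm (\<Sum>i<degree P. coeff P i * x ^ i)" by simp
  also have "\<dots> \<le> (\<Sum>i<degree P. norm (coeff P i) * norm x ^ (degree P - 1))"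
  proof (rule sum_norm_le)
    fix i assume "i \<in> {..<degree P}"
    hence "norm x ^ i \<le> norm x ^ (degree P - 1)" using assms(2) by (intro power_increasing) auto
    thus "norm (coeff P i * x ^ i) \<le> norm (coeff P i) * norm x ^ (degree P - 1)"
      by (simp add: norm_mult norm_power mult_left_mono)
  qed
  also have "\<dots> = (\<Sum>i<degree P. norm (coeff P i)) * norm x ^ (degree P - 1)"
    by (simp add: sum_distrib_right)
  finally show ?thesis .
qed

(* If h is equivariant under a family S of unimodular scalars, its Green function is S-invariant:
   the iterates of h are then equivariant too, so orbits of x and of \<zeta> x have equal moduli. *)
lemma green_unimodular_invariant:
  assumes unimodular: "\<And>\<zeta>. \<zeta> \<in> S \<Longrightarrow> norm \<zeta> = 1"
    and equivariant: "\<And>\<zeta>. \<zeta> \<in> S \<Longrightarrow> \<exists>\<zeta>'\<in>S. \<forall>x. poly h (\<zeta> * x) = \<zeta>' * poly h x"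
    and "\<zeta> \<in> S"
  shows "green h (\<zeta> * x) = green h x"
proof -
  have iterates: "\<exists>\<zeta>'\<in>S. \<forall>x. (poly h ^^ n) (\<zeta> * x) = \<zeta>' * (poly h ^^ n) x"
    if "\<zeta> \<in> S" for n \<zeta>
    using that
  proof (induction n)
    case (Suc n)
    then obtain \<zeta>1 where \<zeta>1: "\<zeta>1 \<in> S" "\<forall>x. (poly h ^^ n) (\<zeta> * x) = \<zeta>1 * (poly h ^^ n) x"
      by blast
    with equivariant obtain \<zeta>2 where "\<zeta>2 \<in> S" "\<forall>x. poly h (\<zeta>1 * x) = \<zeta>2 * poly h x"
      by blast
    with \<zeta>1 show ?case by auto
  qed auto
  have "norm ((poly h ^^ n) (\<zeta> * x)) = norm ((poly h ^^ n) x)" for n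
    using iterates[OF \<open>\<zeta> \<in> S\<close>, of n] unimodular by (auto simp: norm_mult)
  thus ?thesis unfolding green_def by simp
qed

locale monic_poly =
  fixes h :: "complex poly"
  assumes monic: "lead_coeff h = 1" and degree_ge_2: "degree h \<ge> 2"
begin

abbreviation dh :: nat where "dh \<equiv> degree h"

(* Beyond escape_radius, h is dominated by its leading monomial. *)
definition lower_coeff_norm :: real where
  "lower_coeff_norm = (\<Sum>i<dh. norm (coeff h i))"

definition escape_radius :: real where
  "escape_radius = max 2 (2 * lower_coeff_norm)"

(* How far log+|x| is from satisfying the functional equation G(h x) = d G(x). *)
definition defect :: "complex \<Rightarrow> real" where
  "defect x = logplus (norm (poly h x)) - real dh * logplus (norm x)"

definition escape_rate :: "nat \<Rightarrow> complex \<Rightarrow> real" where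
  "escape_rate n x = logplus (norm ((poly h ^^ n) x)) / real dh ^ n"

lemma dh_ge_2: "real dh \<ge> 2"
  using degree_ge_2 by simp

lemma lower_coeff_norm_nonneg: "lower_coeff_norm \<ge> 0"
  unfolding lower_coeff_norm_def by (intro sum_nonneg) auto

lemma escape_radius_ge: "escape_radius \<ge> 2" "escape_radius \<ge> 2 * lower_coeff_norm"
  unfolding escape_radius_def by auto

lemma leading_ratio_close:
  assumes x: "norm x \<ge> 1"
  shows "norm (poly h x / x ^ dh - 1) \<le> lower_coeff_norm / norm x"
proof -
  have x_pos: "norm x > 0" using x by linarith
  have split_power: "norm x ^ dh = norm x * norm x ^ (dh - 1)"
    using degree_ge_2 by (metis Suc_diff_1 less_le_trans power_Suc zero_less_one pos2)
  have "poly h x / x ^ dh - 1 = (poly h x - x ^ dh) / x ^ dh"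
    using x_pos by (simp add: diff_divide_distrib)
  hence "norm (poly h x / x ^ dh - 1) = norm (poly h x - x ^ dh) / norm x ^ dh"
    by (simp add: norm_divide norm_power)
  also have "\<dots> \<le> lower_coeff_norm * norm x ^ (dh - 1) / norm x ^ dh"
    unfolding lower_coeff_norm_def
    by (intro divide_right_mono monic_poly_minus_leading[OF monic x]) simp
  also have "\<dots> = lower_coeff_norm / norm x"
    using split_power x_pos by (simp add: field_simps)
  finally show ?thesis .
qed

lemma leading_ratio_tendsto: "((\<lambda>x. poly h x / x ^ dh) \<longlongrightarrow> 1) at_infinity"
proof (rule LIM_zero_cancel, rule Lim_null_comparison)
  show "\<forall>\<^sub>F x in at_infinity. norm (poly h x / x ^ dh - 1) \<le> lower_coeff_norm / norm x"
    unfolding eventually_at_infinity by (intro exI[of _ 1] allI impI leading_ratio_close)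
  show "((\<lambda>x. lower_coeff_norm / norm x) \<longlongrightarrow> 0) at_infinity"
    by (intro tendsto_divide_0[OF tendsto_const] filterlim_at_top_imp_at_infinity[OF filterlim_norm_at_top])
qed

lemma leading_term_dominates:
  assumes x: "norm x \<ge> escape_radius"
  shows "norm (poly h x) \<ge> norm x ^ dh / 2" "norm (poly h x) \<ge> norm x"
    "\<bar>defect x\<bar> \<le> 2 * lower_coeff_norm / norm x"
proof -
  have x2: "norm x \<ge> 2" and xH: "2 * lower_coeff_norm \<le> norm x"
    using x escape_radius_ge by auto
  have x_pos: "norm x > 0" using x2 by linarith
  define t where "t = norm (poly h x) / norm x ^ dh"
  have "\<bar>t - 1\<bar> \<le> norm (poly h x / x ^ dh - 1)"
    unfolding t_def using norm_triangle_ineq3[of "poly h x / x ^ dh" 1] by (simp add: norm_divide norm_power)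
  hence t_close: "\<bar>t - 1\<bar> \<le> lower_coeff_norm / norm x"
    using leading_ratio_close x2 by (smt (verit) one_le_numeral)
  have small: "lower_coeff_norm / norm x \<le> 1/2"
    using xH x_pos by (simp add: field_simps)
  have "norm (poly h x) = t * norm x ^ dh" unfolding t_def using x_pos by simp
  moreover have "t \<ge> 1/2" using t_close small by linarith
  hence "(1/2) * norm x ^ dh \<le> t * norm x ^ dh" by (intro mult_right_mono) auto
  ultimately show big: "norm (poly h x) \<ge> norm x ^ dh / 2" by simp
  have "norm x ^ dh \<ge> norm x ^ 2"
    using x2 degree_ge_2 by (intro power_increasing) auto
  moreover have "norm x ^ 2 \<ge> 2 * norm x"
    using x2 by (simp add: power2_eq_square mult_right_mono)
  ultimately show out: "norm (poly h x) \<ge> norm x" using big by linarith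
  have "defect x = ln (norm (poly h x)) - real dh * ln (norm x)"
    unfolding defect_def using out x2 by (simp add: logplus_eq_ln)
  also have "\<dots> = ln t"
    unfolding t_def using out x_pos by (subst ln_div) (auto simp: ln_realpow)
  finally have "defect x = ln t" .
  moreover have "\<bar>ln t\<bar> \<le> 2 * \<bar>t - 1\<bar>"
    using t_close small by (intro abs_ln_le_twice) linarith
  ultimately show "\<bar>defect x\<bar> \<le> 2 * lower_coeff_norm / norm x"
    using t_close by simp
qed

lemma orbit_escapes:
  "norm x \<ge> escape_radius \<Longrightarrow> norm ((poly h ^^ n) x) \<ge> norm x"
proof (induction n)
  case (Suc n)
  hence "norm ((poly h ^^ n) x) \<ge> escape_radius" by simp
  from leading_term_dominates(2)[OF this] Suc show ?case by simp
qed simp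

(* The defect is globally bounded: near infinity by the previous estimate, elsewhere by compactness. *)
lemma defect_bounded: "\<exists>B\<ge>0. \<forall>x. \<bar>defect x\<bar> \<le> B"
proof -
  have "compact (poly h ` cball 0 escape_radius)"
    by (intro compact_continuous_image continuous_on_poly continuous_on_id compact_cball)
  then obtain M where M: "\<And>x. x \<in> cball 0 escape_radius \<Longrightarrow> norm (poly h x) \<le> M"
    using compact_imp_bounded bounded_iff by (metis imageI)
  have M_nonneg: "M \<ge> 0" using M[of 0] escape_radius_ge by (smt (verit) mem_cball_0 norm_ge_zero norm_zero)
  have "\<bar>defect x\<bar> \<le> M + dh * escape_radius + 1" for x
  proof (cases "norm x \<ge> escape_radius")
    case True
    have "2 * lower_coeff_norm / norm x \<le> 1"
      using True escape_radius_ge by (subst divide_le_eq_1) auto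
    moreover have "real dh * escape_radius \<ge> 0" using escape_radius_ge by simp
    ultimately show ?thesis using leading_term_dominates(3)[OF True] M_nonneg by linarith
  next
    case False
    hence "norm (poly h x) \<le> M" using M by simp
    hence "logplus (norm (poly h x)) \<le> M" using logplus_le_self[of "norm (poly h x)"] by simp
    moreover have "real dh * logplus (norm x) \<le> real dh * escape_radius"
      using logplus_le_self[of "norm x"] False by (intro mult_left_mono) auto
    ultimately show ?thesis
      unfolding defect_def using logplus_nonneg[of "norm x"] logplus_nonneg[of "norm (poly h x)"]
      by (smt (verit) of_nat_0_le_iff mult_nonneg_nonneg)
  qed
  moreover have "M + dh * escape_radius + 1 \<ge> 0" using M_nonneg escape_radius_ge by simp
  ultimately show ?thesis by blast
qed

lemma escape_rate_Suc:
  "escape_rate (Suc n) x - escape_rate n x = defect ((poly h ^^ n) x) / real dh ^ Suc n"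
  using dh_ge_2 unfolding escape_rate_def defect_def by (simp add: field_simps)

lemma escape_rate_converges:
  assumes "\<And>n. \<bar>defect ((poly h ^^ n) x)\<bar> \<le> B"
  shows "(\<lambda>n. escape_rate n x) \<longlonglongrightarrow> green h x" "\<bar>green h x - escape_rate n x\<bar> \<le> B / real dh ^ n"
proof -
  have inc: "\<bar>escape_rate (Suc n) x - escape_rate n x\<bar> \<le> B / real dh ^ Suc n" for n
    unfolding escape_rate_Suc using assms[of n] dh_ge_2 by (simp add: abs_divide divide_right_mono)
  have green_lim: "green h x = lim (\<lambda>n. escape_rate n x)"
    unfolding green_def escape_rate_def ..
  show "(\<lambda>n. escape_rate n x) \<longlonglongrightarrow> green h x"
    using escape_increments_converge(1)[OF dh_ge_2 inc] green_lim by simp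
  show "\<bar>green h x - escape_rate n x\<bar> \<le> B / real dh ^ n"
    using escape_increments_converge(2)[OF dh_ge_2 inc] green_lim by simp
qed

lemma green_uniform_approx: "\<exists>B\<ge>0. \<forall>x n. \<bar>green h x - escape_rate n x\<bar> \<le> B / real dh ^ n"
  using defect_bounded escape_rate_converges(2) by meson

lemma green_minus_logplus_bounded: "\<exists>B. \<forall>x. \<bar>green h x - logplus (norm x)\<bar> \<le> B"
  using green_uniform_approx by (metis escape_rate_def funpow_0 power_0 div_by_1)

lemma green_near_infinity:
  assumes x: "norm x \<ge> escape_radius"
  shows "\<bar>green h x - logplus (norm x)\<bar> \<le> 2 * lower_coeff_norm / norm x"
proof -
  have x_pos: "norm x > 0" using x escape_radius_ge by linarith
  have "\<bar>defect ((poly h ^^ n) x)\<bar> \<le> 2 * lower_coeff_norm / norm x" for n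
  proof -
    have orbit: "norm ((poly h ^^ n) x) \<ge> norm x" by (rule orbit_escapes[OF x])
    hence "\<bar>defect ((poly h ^^ n) x)\<bar> \<le> 2 * lower_coeff_norm / norm ((poly h ^^ n) x)"
      using x by (intro leading_term_dominates(3)) simp
    also have "\<dots> \<le> 2 * lower_coeff_norm / norm x"
      using orbit x_pos lower_coeff_norm_nonneg by (intro divide_left_mono mult_pos_pos) auto
    finally show ?thesis .
  qed
  from escape_rate_converges(2)[OF this, of 0] show ?thesis by (simp add: escape_rate_def)
qed

lemma green_functional_equation: "green h (poly h x) = dh * green h x"
proof -
  obtain B where "\<And>y. \<bar>defect y\<bar> \<le> B" using defect_bounded by blast
  hence conv: "(\<lambda>n. escape_rate n y) \<longlonglongrightarrow> green h y" for y
    by (intro escape_rate_converges(1))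
  have shift: "escape_rate n (poly h x) = dh * escape_rate (Suc n) x" for n
    using dh_ge_2 unfolding escape_rate_def by (simp add: funpow_swap1 field_simps)
  have "(\<lambda>n. dh * escape_rate (Suc n) x) \<longlonglongrightarrow> dh * green h x"
    using conv[of x] by (intro tendsto_mult_left) (rule LIMSEQ_Suc)
  hence "(\<lambda>n. escape_rate n (poly h x)) \<longlonglongrightarrow> dh * green h x" by (simp only: shift)
  thus ?thesis using conv LIMSEQ_unique by blast
qed

(* G_h is a uniform limit of continuous functions. *)
lemma green_continuous: "continuous_on UNIV (green h)"
proof (rule uniform_limit_theorem)
  have iterate_cont: "continuous_on UNIV (poly h ^^ n)" for n
  proof (induction n)
    case (Suc n)
    hence "continuous_on UNIV (\<lambda>x. poly h ((poly h ^^ n) x))"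
      by (intro continuous_on_poly) (simp add: o_def)
    thus ?case by (simp add: o_def)
  qed (simp add: continuous_on_id id_def)
  have "escape_rate n = (\<lambda>x. ln (max 1 (norm ((poly h ^^ n) x))) / real dh ^ n)" for n
    by (rule ext) (simp add: escape_rate_def logplus_eq_ln_max)
  moreover have "continuous_on UNIV (\<lambda>x. ln (max 1 (norm ((poly h ^^ n) x))) / real dh ^ n)" for n
    using iterate_cont[of n] dh_ge_2 by (intro continuous_intros) (auto simp: o_def)
  ultimately show "\<forall>\<^sub>F n in sequentially. continuous_on UNIV (escape_rate n)" by simp
  obtain B where B: "\<And>x n. \<bar>green h x - escape_rate n x\<bar> \<le> B / real dh ^ n"
    using green_uniform_approx by blast
  show "uniform_limit UNIV escape_rate (green h) sequentially"
    unfolding uniform_limit_iff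
  proof (intro allI impI)
    fix e :: real assume e: "e > 0"
    have "(\<lambda>n. B * (1 / real dh) ^ n) \<longlonglongrightarrow> B * 0"
      using dh_ge_2 by (intro tendsto_mult_left LIMSEQ_power_zero) auto
    hence "\<forall>\<^sub>F n in sequentially. B / real dh ^ n < e"
      using e by (auto dest: order_tendstoD(2) simp: power_divide)
    thus "\<forall>\<^sub>F n in sequentially. \<forall>x\<in>UNIV. dist (escape_rate n x) (green h x) < e"
      by eventually_elim (use B in \<open>auto simp: dist_real_def abs_minus_commute intro: le_less_trans\<close>)
  qed
qed simp


(* Far out, G_h behaves like log|x|, so a relative perturbation of size \<theta> changes it by O(\<theta> + 1/|X|). *)
lemma green_far_continuity:
  assumes X: "norm X \<ge> 2 * escape_radius" and \<theta>: "\<theta> \<le> 1/4"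
    and vX: "norm (v - X) \<le> \<theta> * (1 + norm X)"
  shows "\<bar>green h v - green h X\<bar> \<le> 6 * lower_coeff_norm / norm X + 4 * \<theta>"
proof -
  have X1: "norm X \<ge> 1" "norm X \<ge> escape_radius" using X escape_radius_ge by linarith+
  have X_pos: "norm X > 0" using X1 by linarith
  have "\<theta> * (1 + norm X) \<ge> 0" using vX norm_ge_zero order_trans by blast
  hence \<theta>_nonneg: "\<theta> \<ge> 0" using X_pos by (simp add: zero_le_mult_iff)
  have "\<theta> * (1 + norm X) \<le> (1/4) * (1 + norm X)" using \<theta> X_pos by (intro mult_right_mono) auto
  moreover have "(1/4) * (1 + norm X) \<le> norm X / 2" using X1 by simp
  ultimately have "norm (v - X) \<le> norm X / 2" using vX by linarith
  hence v_big: "norm v \<ge> norm X / 2" using norm_triangle_ineq2[of X v] by (simp add: norm_minus_commute)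
  hence v1: "norm v \<ge> escape_radius" "norm v \<ge> 1" using X escape_radius_ge by linarith+
  have v_pos: "norm v > 0" using v1 by linarith
  have green_v: "\<bar>green h v - ln (norm v)\<bar> \<le> 2 * lower_coeff_norm / norm v"
    using green_near_infinity[OF v1(1)] v1 by (simp add: logplus_eq_ln)
  have green_X: "\<bar>green h X - ln (norm X)\<bar> \<le> 2 * lower_coeff_norm / norm X"
    using green_near_infinity[OF X1(2)] X1 by (simp add: logplus_eq_ln)
  have "2 * lower_coeff_norm / norm v \<le> 2 * lower_coeff_norm / (norm X / 2)"
    using v_big lower_coeff_norm_nonneg X_pos v_pos by (intro divide_left_mono) auto
  hence green_v': "2 * lower_coeff_norm / norm v \<le> 4 * lower_coeff_norm / norm X" by simp
  define t where "t = norm v / norm X"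
  have "t - 1 = (norm v - norm X) / norm X" unfolding t_def using X_pos by (simp add: diff_divide_distrib)
  hence "\<bar>t - 1\<bar> = \<bar>norm v - norm X\<bar> / norm X" by (simp add: abs_divide)
  also have "\<dots> \<le> norm (v - X) / norm X" using X_pos by (intro divide_right_mono norm_triangle_ineq3) auto
  also have "\<dots> \<le> \<theta> * (1 + norm X) / norm X" using X_pos vX by (intro divide_right_mono) auto
  also have "\<dots> \<le> \<theta> * (2 * norm X) / norm X" using X_pos X1 \<theta>_nonneg by (intro divide_right_mono mult_left_mono) auto
  also have "\<dots> = 2 * \<theta>" using X_pos by simp
  finally have t_close: "\<bar>t - 1\<bar> \<le> 2 * \<theta>" .
  hence "\<bar>ln t\<bar> \<le> 2 * \<bar>t - 1\<bar>" using \<theta> by (intro abs_ln_le_twice) linarith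
  hence "\<bar>ln (norm v) - ln (norm X)\<bar> \<le> 4 * \<theta>" using t_close v_pos X_pos unfolding t_def by (simp add: ln_div)
  moreover have "4 * lower_coeff_norm / norm X + 2 * lower_coeff_norm / norm X = 6 * lower_coeff_norm / norm X"
    by (simp add: add_divide_distrib[symmetric])
  ultimately show ?thesis using green_v green_X green_v' by linarith
qed

(* G_h is uniformly continuous at the relative scale 1 + |X|: by compactness on a large disc,
   and by the logarithmic asymptotics outside it. *)
lemma green_relative_continuity:
  assumes \<eta>: "\<eta> > 0"
  shows "\<exists>\<theta>>0. \<forall>X v. norm (v - X) \<le> \<theta> * (1 + norm X) \<longrightarrow> \<bar>green h v - green h X\<bar> \<le> \<eta>"
proof -
  define K where "K = max (2 * escape_radius) (12 * lower_coeff_norm / \<eta>)"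
  have K: "K \<ge> 2 * escape_radius" "K \<ge> 12 * lower_coeff_norm / \<eta>" "K > 0"
    unfolding K_def using escape_radius_ge by auto
  have "uniformly_continuous_on (cball 0 (K + 1)) (green h)"
    by (intro compact_uniformly_continuous continuous_on_subset[OF green_continuous]) auto
  then obtain \<delta> where \<delta>: "\<delta> > 0"
    "\<And>x y. x \<in> cball 0 (K + 1) \<Longrightarrow> y \<in> cball 0 (K + 1) \<Longrightarrow> dist y x < \<delta> \<Longrightarrow> dist (green h y) (green h x) < \<eta>"
    unfolding uniformly_continuous_on_def using \<eta> by metis
  define \<theta> where "\<theta> = min (1/4) (min (\<eta>/8) (min \<delta> 1 / (2 * (1 + K))))"
  have "\<theta> > 0" unfolding \<theta>_def using \<eta> \<delta>(1) K(3) by simp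
  moreover have "\<theta> \<le> 1/4" unfolding \<theta>_def by (rule min.cobounded1)
  moreover have "\<theta> \<le> \<eta>/8" unfolding \<theta>_def by (rule min.coboundedI2[OF min.cobounded1])
  ultimately have \<theta>123: "\<theta> > 0" "\<theta> \<le> 1/4" "\<theta> \<le> \<eta>/8" by blast+
  have "\<theta> \<le> min \<delta> 1 / (2 * (1 + K))" unfolding \<theta>_def by simp
  hence "\<theta> * (2 * (1 + K)) \<le> min \<delta> 1" using K(3) by (simp add: pos_le_divide_eq)
  note \<theta> = \<theta>123 this
  show ?thesis
  proof (intro exI[of _ \<theta>] conjI allI impI \<theta>(1))
    fix X v :: complex assume vX: "norm (v - X) \<le> \<theta> * (1 + norm X)"
    show "\<bar>green h v - green h X\<bar> \<le> \<eta>"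
    proof (cases "norm X \<le> K")
      case True
      have "\<theta> * (1 + norm X) \<le> \<theta> * (1 + K)" using True \<theta> by (intro mult_left_mono) auto
      hence close: "norm (v - X) \<le> min \<delta> 1 / 2" using vX \<theta>(4) by (simp add: field_simps)
      hence "norm v \<le> K + 1" using True norm_triangle_ineq2[of v X] by linarith
      moreover have "dist v X < \<delta>" using close \<delta>(1) by (simp add: dist_norm)
      ultimately have "dist (green h v) (green h X) < \<eta>" using True by (intro \<delta>(2)) auto
      thus ?thesis by (simp add: dist_real_def)
    next
      case False
      have "12 * lower_coeff_norm / \<eta> \<le> norm X" using K(2) False by linarith
      hence "12 * lower_coeff_norm \<le> norm X * \<eta>" using \<eta> by (simp add: field_simps)
      moreover have "norm X > 0" using False K(3) by linarith
      ultimately have "6 * lower_coeff_norm / norm X \<le> \<eta> / 2" by (simp add: field_simps)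
      moreover have "norm X \<ge> 2 * escape_radius" using False K(1) by linarith
      ultimately show ?thesis using green_far_continuity[OF _ \<theta>(2) vX] \<theta>(3) by fastforce
    qed
  qed
qed

lemma degree_growth: "\<exists>C>0. \<forall>c. (1 + norm c) ^ dh \<le> C * (1 + norm (poly h c))"
proof -
  define C where "C = 2 ^ (dh + 1) + (1 + escape_radius) ^ dh"
  have C_ge: "C \<ge> 2 ^ (dh + 1)" "C \<ge> (1 + escape_radius) ^ dh"
    unfolding C_def using escape_radius_ge by auto
  have C_pos: "C > 0" using C_ge(1) by (smt (verit) zero_less_power)
  hence C_nonneg: "C \<ge> 0" by simp
  have "(1 + norm c) ^ dh \<le> C * (1 + norm (poly h c))" for c
  proof (cases "norm c \<ge> escape_radius")
    case True
    have "(1 + norm c) ^ dh \<le> (2 * norm c) ^ dh"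
      using True escape_radius_ge by (intro power_mono) auto
    also have "\<dots> = 2 ^ (dh + 1) * (norm c ^ dh / 2)" by (simp add: power_mult_distrib)
    also have "\<dots> \<le> 2 ^ (dh + 1) * norm (poly h c)"
      using leading_term_dominates(1)[OF True] by (intro mult_left_mono) auto
    also have "\<dots> \<le> C * (1 + norm (poly h c))"
      using C_ge C_pos by (intro mult_mono) auto
    finally show ?thesis .
  next
    case False
    have "(1 + norm c) ^ dh \<le> (1 + escape_radius) ^ dh" using False by (intro power_mono) auto
    also have "\<dots> \<le> C * 1" using C_ge by simp
    also have "\<dots> \<le> C * (1 + norm (poly h c))"
      using C_nonneg by (intro mult_left_mono) auto
    finally show ?thesis .
  qed
  with C_pos show ?thesis by blast
qed

lemma green_perturbation:
  assumes \<eta>: "\<eta> > 0"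
  shows "\<exists>\<theta>>0. \<forall>c \<nu> r :: complex. norm (\<nu> - 1) \<le> \<theta> \<longrightarrow> norm r \<le> \<theta> * (1 + norm c) ^ dh \<longrightarrow>
           \<bar>green h (\<nu> * (poly h c + r)) - green h (poly h c)\<bar> \<le> \<eta>"
proof -
  obtain \<theta>0 where \<theta>0: "\<theta>0 > 0"
    "\<And>X v. norm (v - X) \<le> \<theta>0 * (1 + norm X) \<Longrightarrow> \<bar>green h v - green h X\<bar> \<le> \<eta>"
    using green_relative_continuity[OF \<eta>] by blast
  obtain C where C: "C > 0" "\<And>c. (1 + norm c) ^ dh \<le> C * (1 + norm (poly h c))"
    using degree_growth by blast
  define \<theta> where "\<theta> = min 1 (min (\<theta>0 / 4) (\<theta>0 / (4 * C)))"
  have \<theta>: "\<theta> > 0" "\<theta> \<le> 1" "\<theta> \<le> \<theta>0 / 4" "\<theta> \<le> \<theta>0 / (4 * C)"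
    unfolding \<theta>_def using \<theta>0(1) C(1) by auto
  show ?thesis
  proof (intro exI[of _ \<theta>] conjI allI impI \<theta>(1))
    fix c \<nu> r :: complex assume \<nu>: "norm (\<nu> - 1) \<le> \<theta>" and r: "norm r \<le> \<theta> * (1 + norm c) ^ dh"
    define X where "X = poly h c"
    have "norm r \<le> \<theta>0 / (4 * C) * (C * (1 + norm X))"
      using r \<theta>(4) C(2)[of c] \<theta>(1) unfolding X_def
      by (smt (verit) mult_mono norm_ge_zero zero_le_power)
    hence r_small: "norm r \<le> \<theta>0 / 4 * (1 + norm X)" using C(1) by simp
    have \<nu>_le: "norm \<nu> \<le> 2" using \<nu> \<theta>(2) norm_triangle_ineq2[of \<nu> 1] by simp
    have "norm (\<nu> * (X + r) - X) = norm ((\<nu> - 1) * X + \<nu> * r)" by (simp add: algebra_simps)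
    also have "\<dots> \<le> norm (\<nu> - 1) * norm X + norm \<nu> * norm r"
      by (rule order.trans[OF norm_triangle_ineq]) (simp add: norm_mult)
    also have "\<dots> \<le> \<theta>0 / 4 * norm X + 2 * (\<theta>0 / 4 * (1 + norm X))"
      using \<nu> \<theta>(3) \<nu>_le r_small \<theta>0(1) by (intro add_mono mult_mono) auto
    also have "\<dots> \<le> \<theta>0 * (1 + norm X)" using \<theta>0(1) by (simp add: field_simps)
    finally show "\<bar>green h (\<nu> * (poly h c + r)) - green h (poly h c)\<bar> \<le> \<eta>"
      using \<theta>0(2) unfolding X_def by blast
  qed
qed

lemma green_pseudo_orbit:
  assumes step: "\<And>n. \<bar>green h (c (Suc n)) - dh * green h (c n)\<bar> \<le> \<eta>"
  shows "\<exists>L. (\<lambda>n. logplus (norm (c n)) / real dh ^ n) \<longlonglongrightarrow> L \<and> \<bar>L - green h (c 0)\<bar> \<le> \<eta>"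
proof -
  define g where "g n = green h (c n) / real dh ^ n" for n
  have inc: "\<bar>g (Suc n) - g n\<bar> \<le> \<eta> / real dh ^ Suc n" for n
  proof -
    have "g (Suc n) - g n = (green h (c (Suc n)) - dh * green h (c n)) / real dh ^ Suc n"
      unfolding g_def using dh_ge_2 by (simp add: field_simps)
    thus ?thesis using step[of n] dh_ge_2 by (simp add: abs_divide divide_right_mono)
  qed
  obtain B where B: "\<And>x. \<bar>green h x - logplus (norm x)\<bar> \<le> B"
    using green_minus_logplus_bounded by blast
  have "(\<lambda>n. logplus (norm (c n)) / real dh ^ n - g n) \<longlonglongrightarrow> 0"
  proof (rule Lim_null_comparison)
    show "\<forall>\<^sub>F n in sequentially. norm (logplus (norm (c n)) / real dh ^ n - g n) \<le> B * (1 / dh) ^ n"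
    proof (intro always_eventually allI)
      fix n
      have "norm (logplus (norm (c n)) / real dh ^ n - g n) = \<bar>green h (c n) - logplus (norm (c n))\<bar> / real dh ^ n"
        unfolding g_def using dh_ge_2 by (simp add: abs_divide abs_minus_commute diff_divide_distrib[symmetric])
      also have "\<dots> \<le> B * (1 / dh) ^ n"
        using B[of "c n"] dh_ge_2 by (simp add: power_divide divide_right_mono)
      finally show "norm (logplus (norm (c n)) / real dh ^ n - g n) \<le> B * (1 / dh) ^ n" .
    qed
    show "(\<lambda>n. B * (1 / real dh) ^ n) \<longlonglongrightarrow> 0"
      using dh_ge_2 by (intro tendsto_mult_right_zero LIMSEQ_power_zero) auto
  qed
  hence "(\<lambda>n. (logplus (norm (c n)) / real dh ^ n - g n) + g n) \<longlonglongrightarrow> 0 + lim g"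
    by (intro tendsto_add escape_increments_converge(1)[OF dh_ge_2 inc])
  moreover have "\<bar>lim g - green h (c 0)\<bar> \<le> \<eta>"
    using escape_increments_converge(2)[OF dh_ge_2 inc, of 0] by (simp add: g_def[of 0])
  ultimately show ?thesis by auto
qed

end

locale skew_product =
  fixes p :: "complex poly" and q :: "complex poly poly"
  assumes p_monic: "lead_coeff p = 1" and p_deg: "degree p \<ge> 2" and q_deg: "degree q \<ge> 2"
    and b_monic: "lead_coeff (lead_coeff q) = 1" and delta_gt: "degree p > degree q"
    and alpha_eq: "alpha_exp p q = real (degree (lead_coeff q)) / (real (degree p) - real (degree q))"
begin

abbreviation \<alpha> :: real where "\<alpha> \<equiv> alpha_exp p q"
abbreviation \<delta> :: nat where "\<delta> \<equiv> degree p"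
abbreviation d :: nat where "d \<equiv> degree q"
abbreviation h :: "complex poly" where "h \<equiv> hpoly p q"

(* The weight n + \<alpha> m of the monomial z^n w^m, measured relative to the top weight \<alpha> \<delta>. *)
definition excess :: "nat \<Rightarrow> nat \<Rightarrow> real" where
  "excess m n = real n + \<alpha> * real m - \<alpha> * real \<delta>"

definition h_coeff :: "nat \<Rightarrow> complex" where
  "h_coeff m = (\<Sum>n\<le>degree (coeff q m). if excess m n = 0 then coeff (coeff q m) n else 0)"

lemma nonzero_coeff_range:
  "coeff (coeff q m) n \<noteq> 0 \<Longrightarrow> m \<le> d \<and> n \<le> degree (coeff q m)"
  by (metis coeff_0 le_degree)

lemma alpha_candidates_finite:
  "finite {real n / (real \<delta> - real m) | n m. coeff (coeff q m) n \<noteq> 0}"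
proof (rule finite_subset)
  show "{real n / (real \<delta> - real m) | n m. coeff (coeff q m) n \<noteq> 0} \<subseteq>
        (\<lambda>(m, n). real n / (real \<delta> - real m)) ` (SIGMA m:{..d}. {..degree (coeff q m)})"
    using nonzero_coeff_range by fastforce
qed auto

(* \<alpha> is the maximal slope, so every monomial of q has weight at most \<alpha> \<delta>. *)
lemma excess_nonpos:
  assumes "coeff (coeff q m) n \<noteq> 0"
  shows "excess m n \<le> 0"
proof -
  have "m \<le> d" using nonzero_coeff_range[OF assms] by simp
  hence pos: "real \<delta> - real m > 0" using delta_gt by simp
  have "real n / (real \<delta> - real m) \<le> \<alpha>" unfolding alpha_exp_def
    by (rule Max_ge[OF alpha_candidates_finite]) (use assms in blast)
  hence "real n \<le> \<alpha> * (real \<delta> - real m)" using pos by (simp add: pos_divide_le_eq)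
  thus ?thesis unfolding excess_def by (simp add: algebra_simps)
qed

lemma hpoly_eq: "h = (\<Sum>m\<le>d. monom (h_coeff m) m)"
  by (simp add: hpoly_def h_coeff_def excess_def algebra_simps)

lemma poly_hpoly: "poly h c = (\<Sum>m\<le>d. h_coeff m * c ^ m)"
  by (simp add: hpoly_eq poly_sum poly_monom)

(* The top-weight part of the leading coefficient b = z^\<gamma> + ... is exactly z^\<gamma>. *)
lemma h_coeff_top: "h_coeff d = 1"
proof -
  have "\<alpha> * (real \<delta> - real d) = real (degree (lead_coeff q))"
    using alpha_eq delta_gt by simp
  hence "excess d n = 0 \<longleftrightarrow> n = degree (lead_coeff q)" for n
    unfolding excess_def by (auto simp: algebra_simps)
  hence "h_coeff d = (\<Sum>n\<le>degree (lead_coeff q). if n = degree (lead_coeff q) then coeff (lead_coeff q) n else 0)"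
    unfolding h_coeff_def by simp
  also have "\<dots> = 1" using b_monic by simp
  finally show ?thesis .
qed

lemma hpoly_degree [simp]: "degree h = d"
proof (rule antisym)
  show "degree h \<le> d" by (rule degree_le) (simp add: hpoly_eq coeff_sum coeff_monom)
  show "d \<le> degree h" by (rule le_degree) (simp add: hpoly_eq coeff_sum coeff_monom h_coeff_top)
qed

lemma hpoly_monic: "lead_coeff h = 1"
proof -
  have "lead_coeff h = coeff h d" by (simp only: hpoly_degree)
  also have "\<dots> = 1" by (simp add: hpoly_eq coeff_sum coeff_monom h_coeff_top)
  finally show ?thesis .
qed

(* The Green-function theory applies to h, and to p, whose orbits escape to infinity. *)
sublocale H: monic_poly h
  by unfold_locales (use hpoly_monic q_deg in auto)

sublocale P: monic_poly p
  by unfold_locales (use p_monic p_deg in auto)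

(* Two branches of y^\<alpha> differ by a factor exp(2\<pi>i\<alpha>k). *)
definition phase :: "int \<Rightarrow> complex" where
  "phase k = exp (complex_of_real (\<alpha> * (2 * pi * real_of_int k)) * \<i>)"

lemma exp_2pi_int: "exp (complex_of_real (2 * pi * real_of_int j) * \<i>) = 1"
proof -
  have "exp (complex_of_real (2 * pi * real_of_int j) * \<i>) = exp 0"
    unfolding exp_eq by (intro exI[of _ j]) (simp add: mult_ac)
  thus ?thesis by simp
qed

lemma phase_power: "phase k ^ m = phase (k * int m)"
proof -
  have "phase k ^ m = exp (of_nat m * (complex_of_real (\<alpha> * (2 * pi * real_of_int k)) * \<i>))"
    unfolding phase_def by (rule exp_of_nat_mult[symmetric])
  also have "\<dots> = phase (k * int m)" unfolding phase_def by (simp add: mult_ac)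
  finally show ?thesis .
qed

lemma norm_phase: "norm (phase k) = 1"
  unfolding phase_def norm_exp_eq_Re by simp

lemma phase_power_top_weight:
  assumes "excess m n = 0"
  shows "phase k ^ m = phase k ^ \<delta>"
proof -
  have top: "\<alpha> * real \<delta> = real n + \<alpha> * real m" using assms unfolding excess_def by simp
  have "phase k ^ \<delta> = phase (k * int \<delta>)" by (rule phase_power)
  also have "\<dots> = exp (complex_of_real (\<alpha> * real \<delta> * (2 * pi * real_of_int k)) * \<i>)"
    unfolding phase_def by (simp add: mult_ac)
  also have "\<dots> = exp (complex_of_real (\<alpha> * real m * (2 * pi * real_of_int k)) * \<i>
                    + complex_of_real (2 * pi * real_of_int (int n * k)) * \<i>)"
    unfolding top by (simp add: algebra_simps)
  also have "\<dots> = phase (k * int m)"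
    unfolding exp_add exp_2pi_int phase_def by (simp add: mult_ac)
  also have "\<dots> = phase k ^ m" by (rule phase_power[symmetric])
  finally show ?thesis by simp
qed

(* h is quasi-homogeneous, so it is equivariant under the phases. *)
lemma hpoly_phase: "poly h (phase k * c) = phase (k * int \<delta>) * poly h c"
proof -
  have termwise: "h_coeff m * (phase k * c) ^ m = phase k ^ \<delta> * (h_coeff m * c ^ m)" for m
  proof (cases "h_coeff m = 0")
    case False
    have "\<exists>n. excess m n = 0"
    proof (rule ccontr)
      assume "\<nexists>n. excess m n = 0"
      hence "h_coeff m = 0" unfolding h_coeff_def by (intro sum.neutral) auto
      with False show False by simp
    qed
    then obtain n where "excess m n = 0" by blast
    thus ?thesis using phase_power_top_weight[of m n k] by (simp add: power_mult_distrib)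
  qed simp
  have "poly h (phase k * c) = (\<Sum>m\<le>d. phase k ^ \<delta> * (h_coeff m * c ^ m))"
    unfolding poly_hpoly by (rule sum.cong[OF refl termwise])
  also have "\<dots> = phase (k * int \<delta>) * poly h c"
    by (simp add: poly_hpoly phase_power sum_distrib_left)
  finally show ?thesis .
qed

(* Hence G_h does not see the choice of branch of y^\<alpha>. *)
lemma green_phase_invariant: "green h (phase k * c) = green h c"
proof (rule green_unimodular_invariant[where S = "range phase"])
  show "\<exists>\<zeta>'\<in>range phase. \<forall>x. poly h (\<zeta> * x) = \<zeta>' * poly h x" if "\<zeta> \<in> range phase" for \<zeta>
    using that hpoly_phase by blast
qed (auto simp: norm_phase)

(* Substituting w = c y^\<alpha> into q(y, w): the top-weight monomials give y^{\<alpha>\<delta>} h(c),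
   all other monomials carry the factor y^{excess} with negative excess. *)
definition lower_terms :: "complex \<Rightarrow> complex \<Rightarrow> complex" where
  "lower_terms y c = (\<Sum>m\<le>d. \<Sum>n\<le>degree (coeff q m).
     (if excess m n = 0 then 0 else coeff (coeff q m) n * exp (complex_of_real (excess m n) * Ln y)) * c ^ m)"

lemma monomial_weight_split:
  assumes y: "y \<noteq> 0"
  shows "x * y ^ n * (c * exp (complex_of_real \<alpha> * Ln y)) ^ m =
     exp (complex_of_real (\<alpha> * real \<delta>) * Ln y) * ((if excess m n = 0 then x else 0) * c ^ m +
       (if excess m n = 0 then 0 else x * exp (complex_of_real (excess m n) * Ln y)) * c ^ m)"
proof -
  have "y ^ n * exp (complex_of_real \<alpha> * Ln y) ^ m
        = exp (of_nat n * Ln y) * exp (of_nat m * (complex_of_real \<alpha> * Ln y))"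
    using y by (simp add: exp_of_nat_mult)
  also have "\<dots> = exp (complex_of_real (\<alpha> * real \<delta>) * Ln y) * exp (complex_of_real (excess m n) * Ln y)"
    unfolding exp_add[symmetric] excess_def by (simp add: algebra_simps)
  finally have "x * y ^ n * (c * exp (complex_of_real \<alpha> * Ln y)) ^ m
      = exp (complex_of_real (\<alpha> * real \<delta>) * Ln y) * (x * exp (complex_of_real (excess m n) * Ln y) * c ^ m)"
    by (simp add: power_mult_distrib mult_ac)
  thus ?thesis by auto
qed

lemma q_weighted_expansion:
  assumes y: "y \<noteq> 0"
  shows "eval2 q y (c * exp (complex_of_real \<alpha> * Ln y))
         = exp (complex_of_real (\<alpha> * real \<delta>) * Ln y) * (poly h c + lower_terms y c)"
proof -
  have "eval2 q y (c * exp (complex_of_real \<alpha> * Ln y)) =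
     (\<Sum>m\<le>d. \<Sum>n\<le>degree (coeff q m). coeff (coeff q m) n * y ^ n * (c * exp (complex_of_real \<alpha> * Ln y)) ^ m)"
    unfolding eval2_def poly_altdef by (simp add: sum_distrib_right)
  also have "\<dots> = exp (complex_of_real (\<alpha> * real \<delta>) * Ln y) * (poly h c + lower_terms y c)"
    unfolding monomial_weight_split[OF y] poly_hpoly lower_terms_def h_coeff_def
    by (simp add: sum_distrib_left sum_distrib_right sum.distrib distrib_left)
  finally show ?thesis .
qed

definition lower_terms_bound :: "real \<Rightarrow> real" where
  "lower_terms_bound t = (\<Sum>m\<le>d. \<Sum>n\<le>degree (coeff q m).
     if excess m n = 0 \<or> coeff (coeff q m) n = 0 then 0 else norm (coeff (coeff q m) n) * t powr excess m n)"

lemma lower_terms_le: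
  assumes y: "y \<noteq> 0"
  shows "norm (lower_terms y c) \<le> lower_terms_bound (norm y) * (1 + norm c) ^ d"
proof -
  have "norm (lower_terms y c) \<le> (\<Sum>m\<le>d. \<Sum>n\<le>degree (coeff q m).
     (if excess m n = 0 \<or> coeff (coeff q m) n = 0 then 0
      else norm (coeff (coeff q m) n) * norm y powr excess m n) * (1 + norm c) ^ d)"
    unfolding lower_terms_def
  proof (intro order.trans[OF norm_sum] sum_mono order.trans[OF norm_sum])
    fix m n assume m: "m \<in> {..d}"
    have "norm c ^ m \<le> (1 + norm c) ^ m" by (intro power_mono) auto
    also have "\<dots> \<le> (1 + norm c) ^ d" using m by (intro power_increasing) auto
    finally have cm: "norm c ^ m \<le> (1 + norm c) ^ d" .
    show "norm ((if excess m n = 0 then 0 else coeff (coeff q m) n * exp (complex_of_real (excess m n) * Ln y)) * c ^ m)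
      \<le> (if excess m n = 0 \<or> coeff (coeff q m) n = 0 then 0
         else norm (coeff (coeff q m) n) * norm y powr excess m n) * (1 + norm c) ^ d"
      using cm y by (auto simp: norm_mult norm_exp_eq_Re Re_Ln powr_def norm_power intro!: mult_left_mono)
  qed
  also have "\<dots> = lower_terms_bound (norm y) * (1 + norm c) ^ d"
    unfolding lower_terms_bound_def by (simp add: sum_distrib_right)
  finally show ?thesis .
qed

lemma lower_terms_bound_tendsto: "((\<lambda>y. lower_terms_bound (norm y)) \<longlongrightarrow> 0) at_infinity"
proof -
  have "(lower_terms_bound \<longlongrightarrow> 0) at_top"
    unfolding lower_terms_bound_def
  proof (intro tendsto_null_sum)
    fix m n
    show "((\<lambda>t. if excess m n = 0 \<or> coeff (coeff q m) n = 0 then 0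
                 else norm (coeff (coeff q m) n) * t powr excess m n) \<longlongrightarrow> 0) at_top"
    proof (cases "excess m n = 0 \<or> coeff (coeff q m) n = 0")
      case False
      hence "excess m n < 0" using excess_nonpos[of m n] by auto
      hence "((\<lambda>t. norm (coeff (coeff q m) n) * t powr excess m n) \<longlongrightarrow> 0) at_top"
        by (intro tendsto_mult_right_zero tendsto_neg_powr filterlim_ident)
      thus ?thesis using False by simp
    qed simp
  qed
  thus ?thesis by (rule filterlim_compose[OF _ filterlim_norm_at_top])
qed

(* The fibre map conjugated by w = c y^\<alpha>: c \<mapsto> p(y)^{-\<alpha>} q(y, c y^\<alpha>). *)
definition fibre_map :: "complex \<Rightarrow> complex \<Rightarrow> complex" where
  "fibre_map y c = (poly p y) powr (- complex_of_real \<alpha>) * eval2 q y (c * exp (complex_of_real \<alpha> * Ln y))"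

(* The branch correction p(y)^{-\<alpha>} y^{\<alpha>\<delta>}, up to a phase, tends to 1. *)
lemma branch_correction_tendsto:
  "((\<lambda>y. exp (- (complex_of_real \<alpha> * Ln (poly p y / y ^ \<delta>)))) \<longlongrightarrow> 1) at_infinity"
proof -
  have "((\<lambda>y. Ln (poly p y / y ^ \<delta>)) \<longlongrightarrow> Ln 1) at_infinity"
    by (rule isCont_tendsto_compose[OF continuous_at_Ln P.leading_ratio_tendsto]) simp
  from tendsto_exp[OF tendsto_minus[OF tendsto_mult_left[OF this]]] show ?thesis by simp
qed

lemma fibre_map_phase_form:
  assumes y0: "y \<noteq> 0" and u0: "poly p y / y ^ \<delta> \<noteq> 0"
  shows "\<exists>N. fibre_map y c = phase N * (exp (- (complex_of_real \<alpha> * Ln (poly p y / y ^ \<delta>))) * (poly h c + lower_terms y c))"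
proof -
  define u where "u = poly p y / y ^ \<delta>"
  have u_nz: "u \<noteq> 0" using u0 u_def by simp
  have py: "poly p y = y ^ \<delta> * u" using y0 by (simp add: u_def)
  have py_nz: "poly p y \<noteq> 0" using py y0 u_nz by simp
  have "exp (Ln (poly p y)) = exp (of_nat \<delta> * Ln y + Ln u)"
    using py_nz y0 u_nz by (simp add: exp_add exp_of_nat_mult py)
  then obtain N where N: "Ln (poly p y) = of_nat \<delta> * Ln y + Ln u + complex_of_real (real_of_int (2 * N) * pi) * \<i>"
    unfolding exp_eq by blast
  have "- complex_of_real \<alpha> * Ln (poly p y) + complex_of_real (\<alpha> * real \<delta>) * Ln y =
        complex_of_real (\<alpha> * (2 * pi * real_of_int (-N))) * \<i> + (- (complex_of_real \<alpha> * Ln u))"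
    unfolding N by (simp add: algebra_simps)
  hence "exp (- complex_of_real \<alpha> * Ln (poly p y)) * exp (complex_of_real (\<alpha> * real \<delta>) * Ln y)
         = phase (-N) * exp (- (complex_of_real \<alpha> * Ln u))"
    unfolding phase_def exp_add[symmetric] by simp
  hence "fibre_map y c = phase (-N) * (exp (- (complex_of_real \<alpha> * Ln u)) * (poly h c + lower_terms y c))"
    unfolding fibre_map_def q_weighted_expansion[OF y0] using py_nz by (simp add: powr_def mult_ac)
  thus ?thesis unfolding u_def by blast
qed

lemma fibre_map_green:
  assumes \<eta>: "\<eta> > 0"
  shows "\<exists>R>0. \<forall>y c. norm y \<ge> R \<longrightarrow> \<bar>green h (fibre_map y c) - d * green h c\<bar> \<le> \<eta>"
proof -
  obtain \<theta> where \<theta>: "\<theta> > 0" and perturb: "\<And>c \<nu> r. norm (\<nu> - 1) \<le> \<theta> \<Longrightarrow> norm r \<le> \<theta> * (1 + norm c) ^ d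
      \<Longrightarrow> \<bar>green h (\<nu> * (poly h c + r)) - green h (poly h c)\<bar> \<le> \<eta>"
    using H.green_perturbation[OF \<eta>] by auto
  define \<nu> where "\<nu> y = exp (- (complex_of_real \<alpha> * Ln (poly p y / y ^ \<delta>)))" for y
  have "\<forall>\<^sub>F y in at_infinity. dist (poly p y / y ^ \<delta>) 1 < 1 \<and> dist (\<nu> y) 1 < \<theta> \<and>
        dist (lower_terms_bound (norm y)) 0 < \<theta> \<and> norm y \<ge> 1"
    using tendstoD[OF P.leading_ratio_tendsto, of 1] tendstoD[OF branch_correction_tendsto \<theta>]
      tendstoD[OF lower_terms_bound_tendsto \<theta>] eventually_at_infinity
    unfolding \<nu>_def by (intro eventually_conj) auto
  then obtain R where R: "\<And>y. norm y \<ge> R \<Longrightarrow> dist (poly p y / y ^ \<delta>) 1 < 1 \<and> dist (\<nu> y) 1 < \<theta> \<and>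
        dist (lower_terms_bound (norm y)) 0 < \<theta> \<and> norm y \<ge> 1"
    unfolding eventually_at_infinity by blast
  have "\<bar>green h (fibre_map y c) - d * green h c\<bar> \<le> \<eta>" if y: "norm y \<ge> max R 1" for y c
  proof -
    have y_facts: "dist (poly p y / y ^ \<delta>) 1 < 1" "dist (\<nu> y) 1 < \<theta>"
        "lower_terms_bound (norm y) < \<theta>" "y \<noteq> 0"
      using R[of y] y by auto
    hence "poly p y / y ^ \<delta> \<noteq> 0" by auto
    then obtain N where N: "fibre_map y c = phase N * (\<nu> y * (poly h c + lower_terms y c))"
      using fibre_map_phase_form[OF y_facts(4)] unfolding \<nu>_def by blast
    have "norm (\<nu> y - 1) \<le> \<theta>" using y_facts(2) by (simp add: dist_norm)
    moreover have "norm (lower_terms y c) \<le> \<theta> * (1 + norm c) ^ d"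
      using lower_terms_le[OF y_facts(4), of c] y_facts(3)
      by (smt (verit) mult_right_mono zero_le_power norm_ge_zero)
    ultimately have "\<bar>green h (\<nu> y * (poly h c + lower_terms y c)) - green h (poly h c)\<bar> \<le> \<eta>"
      by (rule perturb)
    thus ?thesis
      unfolding N green_phase_invariant H.green_functional_equation by simp
  qed
  thus ?thesis by (intro exI[of _ "max R 1"]) auto
qed

definition renormalized_orbit :: "complex \<Rightarrow> complex \<Rightarrow> nat \<Rightarrow> complex" where
  "renormalized_orbit z w n = ((poly p ^^ n) z) powr (- complex_of_real \<alpha>) * Qit p q n z w"

lemma renormalized_orbit_0: "renormalized_orbit z w 0 = z powr (- complex_of_real \<alpha>) * w"
  by (simp add: renormalized_orbit_def)

lemma Qit_renormalized:
  assumes y: "(poly p ^^ n) z \<noteq> 0"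
  shows "Qit p q n z w = renormalized_orbit z w n * exp (complex_of_real \<alpha> * Ln ((poly p ^^ n) z))"
proof -
  have "exp (- complex_of_real \<alpha> * Ln ((poly p ^^ n) z)) * exp (complex_of_real \<alpha> * Ln ((poly p ^^ n) z)) = 1"
    by (simp add: exp_add[symmetric])
  thus ?thesis unfolding renormalized_orbit_def using y by (simp add: powr_def mult_ac)
qed

lemma renormalized_orbit_Suc:
  assumes y: "(poly p ^^ n) z \<noteq> 0"
  shows "renormalized_orbit z w (Suc n) = fibre_map ((poly p ^^ n) z) (renormalized_orbit z w n)"
  unfolding fibre_map_def Qit_renormalized[OF y, symmetric] by (simp add: renormalized_orbit_def)

lemma norm_renormalized_orbit:
  assumes y: "(poly p ^^ n) z \<noteq> 0"
  shows "norm (renormalized_orbit z w n) = norm (Qit p q n z w) / norm ((poly p ^^ n) z) powr \<alpha>"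
proof -
  have "norm (((poly p ^^ n) z) powr (- complex_of_real \<alpha>)) = norm ((poly p ^^ n) z) powr (- \<alpha>)"
    using y by (simp add: powr_def norm_exp_eq_Re Re_Ln)
  thus ?thesis unfolding renormalized_orbit_def norm_mult by (simp add: powr_minus_divide)
qed

(* For |z| large the base orbit escapes, the renormalized fibre orbit is an \<epsilon>/2-pseudo-orbit
   for G_h, and the escape rate defining G_z^\<alpha>(w) is the escape rate of that pseudo-orbit. *)
theorem green_asymptotics:
  "\<forall>\<epsilon>>0. \<exists>R>0. \<forall>z w. norm z > R \<longrightarrow> \<bar>Galpha p q z w - green h (z powr (- of_real \<alpha>) * w)\<bar> < \<epsilon>"
proof (intro allI impI)
  fix \<epsilon> :: real assume \<epsilon>: "\<epsilon> > 0"
  obtain R where R: "R > 0" "\<And>y c. norm y \<ge> R \<Longrightarrow> \<bar>green h (fibre_map y c) - d * green h c\<bar> \<le> \<epsilon> / 2"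
    using fibre_map_green[of "\<epsilon> / 2"] \<epsilon> by auto
  have "\<bar>Galpha p q z w - green h (z powr (- of_real \<alpha>) * w)\<bar> < \<epsilon>"
    if z: "norm z > max R P.escape_radius" for z w
  proof -
    have orbit: "norm ((poly p ^^ n) z) \<ge> R" for n
      using P.orbit_escapes[of z n] z by simp
    hence nonzero: "(poly p ^^ n) z \<noteq> 0" for n using R(1) by (metis norm_zero not_le)
    define c where "c = renormalized_orbit z w"
    have pseudo_orbit: "\<bar>green h (c (Suc n)) - real (degree h) * green h (c n)\<bar> \<le> \<epsilon> / 2" for n
      unfolding c_def renormalized_orbit_Suc[OF nonzero] using R(2)[OF orbit] by simp
    obtain L where L: "(\<lambda>n. logplus (norm (c n)) / real d ^ n) \<longlonglongrightarrow> L"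
        "\<bar>L - green h (c 0)\<bar> \<le> \<epsilon> / 2"
      using H.green_pseudo_orbit[of c, OF pseudo_orbit] by auto
    have "Galpha p q z w = L"
      using L(1) unfolding Galpha_def c_def norm_renormalized_orbit[OF nonzero] by (rule limI)
    thus ?thesis using L(2) \<epsilon> unfolding c_def renormalized_orbit_0 by simp
  qed
  moreover have "max R P.escape_radius > 0" using R(1) by simp
  ultimately show "\<exists>R>0. \<forall>z w. norm z > R \<longrightarrow> \<bar>Galpha p q z w - green h (z powr (- of_real \<alpha>) * w)\<bar> < \<epsilon>"
    by blast
qed

end

theorem proposition4p14:
  fixes p :: "complex poly" and q :: "complex poly poly"
  assumes p_monic: "lead_coeff p = 1"
    and p_deg: "degree p \<ge> 2"
    and q_deg: "degree q \<ge> 2"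
    and b_monic: "lead_coeff (lead_coeff q) = 1"
    and delta_gt: "degree p > degree q"
    and alpha_eq: "alpha_exp p q = real (degree (lead_coeff q)) / (real (degree p) - real (degree q))"
    and not_prod: "\<not> poly_product q"
  shows "\<forall>\<epsilon>>0. \<exists>R>0. \<forall>z w. norm z > R \<longrightarrow>
           \<bar>Galpha p q z w - green (hpoly p q) (z powr (- of_real (alpha_exp p q)) * w)\<bar> < \<epsilon>"
proof -
  interpret skew_product p q
    using p_monic p_deg q_deg b_monic delta_gt alpha_eq by unfold_locales
  show ?thesis by (rule green_asymptotics)
qed

end
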